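(* Let $G$ be a finite group and $N\trianglelefteq G$ a normal subgroup. If $N$ and $G/N$ are mixable, then $G$ is mixable, and $\mathrm{mixlen}(G)\le\mathrm{mixlen}(N)+\mathrm{mixlen}(G/N)$.
   Context: For a finite group $G$, a random subproduct is a random element $g_1^{\epsilon_1}\cdots g_k^{\epsilon_k}$ with $g_1,\dots,g_k\in G$ fixed and $\epsilon_1,\dots,\epsilon_k$ independent Bernoulli random variables, $\epsilon_i\sim\mathrm{Ber}(p_i)$, $p_i\in[0,1]$; $k$ is its length. $G$ is mixable if some random subproduct is exactly uniform on $G$, and $\mathrm{mixlen}(G)$ is the minimal length of such. *)

theory Defs
  imports "HOL-Algebra.Algebra"
begin

text \<open>A random subproduct of length k is given by a list
  gs = [g_1,...,g_k] of group elements and a list ps = [p_1,...,p_k] of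
  probabilities.\<close>

fun subprod :: "('a, 'b) monoid_scheme \<Rightarrow> 'a list \<Rightarrow> bool list \<Rightarrow> 'a" where
  "subprod G (g # gs) (e # es) = (if e then g else \<one>\<^bsub>G\<^esub>) \<otimes>\<^bsub>G\<^esub> subprod G gs es"
| "subprod G _ _ = \<one>\<^bsub>G\<^esub>"

text \<open>Probability of the bit vector es when e_i ~ Ber(p_i) independently.\<close>
fun bits_weight :: "real list \<Rightarrow> bool list \<Rightarrow> real" where
  "bits_weight (p # ps) (e # es) = (if e then p else 1 - p) * bits_weight ps es"
| "bits_weight _ _ = 1"

definition subprod_prob :: "('a, 'b) monoid_scheme \<Rightarrow> 'a list \<Rightarrow> real list \<Rightarrow> 'a \<Rightarrow> real" where
  "subprod_prob G gs ps x =
     (\<Sum>es \<in> {es. length es = length gs \<and> subprod G gs es = x}. bits_weight ps es)"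

definition uniform_subprod :: "('a, 'b) monoid_scheme \<Rightarrow> 'a list \<Rightarrow> real list \<Rightarrow> bool" where
  "uniform_subprod G gs ps \<longleftrightarrow>
     set gs \<subseteq> carrier G \<and> length ps = length gs \<and> (\<forall>p \<in> set ps. 0 \<le> p \<and> p \<le> 1) \<and>
     (\<forall>x \<in> carrier G. subprod_prob G gs ps x = 1 / real (card (carrier G)))"

definition mixable :: "('a, 'b) monoid_scheme \<Rightarrow> bool" where
  "mixable G \<longleftrightarrow> (\<exists>gs ps. uniform_subprod G gs ps)"

definition mixlen :: "('a, 'b) monoid_scheme \<Rightarrow> nat" where
  "mixlen G = (LEAST k. \<exists>gs ps. length gs = k \<and> uniform_subprod G gs ps)"

end

theory Submission
  imports Defs
begin

text \<open>Lift a random subproduct \<open>X\<close> that is uniform on \<open>G/N\<close> to \<open>G\<close> by choosing coset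
  representatives, and let \<open>Y\<close> be an independent random subproduct that is uniform on \<open>N\<close>.
  Concatenating the two gives the random subproduct \<open>XY\<close>, and for every \<open>g \<in> G\<close>
  \<open>P(XY = g) = \<Sum>\<^sub>x P(X = x) P(Y = x\<inverse>g) = P(XN = gN) / |N| = 1 / (|G/N| |N|) = 1 / |G|\<close>,
  because \<open>x\<inverse>g \<in> N\<close> exactly when \<open>xN = gN\<close>.\<close>

lemma subprod_carrier_update [simp]: "subprod (G\<lparr>carrier := H\<rparr>) gs es = subprod G gs es"
  by (induction G gs es rule: subprod.induct) auto

lemma subprod_prob_carrier_update [simp]:
  "subprod_prob (G\<lparr>carrier := H\<rparr>) gs ps x = subprod_prob G gs ps x"
  by (simp add: subprod_prob_def)

lemma (in monoid) subprod_closed: "set gs \<subseteq> carrier G \<Longrightarrow> subprod G gs es \<in> carrier G"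
proof (induction gs arbitrary: es)
  case (Cons g gs)
  then show ?case by (cases es) auto
qed simp

lemma (in subgroup) subprod_mem: "set gs \<subseteq> H \<Longrightarrow> subprod G gs es \<in> H"
proof (induction gs arbitrary: es)
  case (Cons g gs)
  then show ?case by (cases es) auto
qed simp

lemma (in monoid) subprod_append:
  assumes "set gs \<subseteq> carrier G" "set hs \<subseteq> carrier G" "length es = length gs"
  shows "subprod G (gs @ hs) (es @ fs) = subprod G gs es \<otimes> subprod G hs fs"
  using assms
proof (induction gs arbitrary: es)
  case (Cons g gs)
  then obtain e es' where "es = e # es'" by (cases es) auto
  with Cons show ?case by (simp add: m_assoc subprod_closed)
qed (simp add: subprod_closed)

lemma (in group_hom) subprod_map_hom:
  "set gs \<subseteq> carrier G \<Longrightarrow> subprod H (map h gs) es = h (subprod G gs es)"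
proof (induction gs arbitrary: es)
  case (Cons g gs)
  then show ?case by (cases es) (auto simp: G.subprod_closed)
qed simp

lemma bits_weight_append:
  "length es = length ps \<Longrightarrow> bits_weight (ps @ qs) (es @ fs) = bits_weight ps es * bits_weight qs fs"
proof (induction ps arbitrary: es)
  case (Cons p ps)
  then show ?case by (cases es) auto
qed simp

lemma finite_bool_lists_length: "finite {es :: bool list. length es = n}"
  using finite_lists_length_eq[of "UNIV :: bool set" n] by simp

lemma sum_bool_lists_length_add:
  fixes f :: "bool list \<Rightarrow> 'c :: comm_monoid_add"
  shows "(\<Sum>es | length es = m + k \<and> P es. f es) =
         (\<Sum>es | length es = m. \<Sum>fs | length fs = k \<and> P (es @ fs). f (es @ fs))"
proof -
  let ?S = "SIGMA es : {es. length es = m}. {fs. length fs = k \<and> P (es @ fs)}"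
  have "{es. length es = m + k \<and> P es} = (\<lambda>(es, fs). es @ fs) ` ?S"
  proof (intro equalityI subsetI)
    fix xs assume "xs \<in> {es. length es = m + k \<and> P es}"
    then show "xs \<in> (\<lambda>(es, fs). es @ fs) ` ?S"
      by (intro image_eqI[of _ _ "(take m xs, drop m xs)"]) auto
  qed auto
  moreover have "inj_on (\<lambda>(es, fs). es @ fs) ?S"
    by (auto simp: inj_on_def)
  ultimately have "(\<Sum>es | length es = m + k \<and> P es. f es) = (\<Sum>(es, fs) \<in> ?S. f (es @ fs))"
    by (simp add: sum.reindex case_prod_unfold)
  also have "\<dots> = (\<Sum>es | length es = m. \<Sum>fs | length fs = k \<and> P (es @ fs). f (es @ fs))"
    by (rule sum.Sigma[symmetric])
      (auto intro: finite_subset[OF _ finite_bool_lists_length] finite_bool_lists_length)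
  finally show ?thesis .
qed

lemma (in group) subprod_prob_append:
  assumes gs: "set gs \<subseteq> carrier G" and hs: "set hs \<subseteq> carrier G"
    and ps: "length ps = length gs" and g: "g \<in> carrier G"
  shows "subprod_prob G (gs @ hs) (ps @ qs) g =
    (\<Sum>es | length es = length gs.
       bits_weight ps es * subprod_prob G hs qs (inv (subprod G gs es) \<otimes> g))"
proof -
  have "subprod_prob G (gs @ hs) (ps @ qs) g =
    (\<Sum>es | length es = length gs. \<Sum>fs | length fs = length hs \<and> subprod G (gs @ hs) (es @ fs) = g.
       bits_weight (ps @ qs) (es @ fs))"
    unfolding subprod_prob_def by (simp add: sum_bool_lists_length_add)
  also have "\<dots> = (\<Sum>es | length es = length gs.
       bits_weight ps es * subprod_prob G hs qs (inv (subprod G gs es) \<otimes> g))"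
  proof (rule sum.cong[OF refl])
    fix es :: "bool list" assume "es \<in> {es. length es = length gs}"
    then have es: "length es = length gs" by simp
    have "subprod G (gs @ hs) (es @ fs) = g \<longleftrightarrow> subprod G hs fs = inv (subprod G gs es) \<otimes> g"
      for fs
      using inv_solve_left[OF subprod_closed[OF hs] subprod_closed[OF gs] g]
      by (auto simp: subprod_append[OF gs hs es])
    then show "(\<Sum>fs | length fs = length hs \<and> subprod G (gs @ hs) (es @ fs) = g.
        bits_weight (ps @ qs) (es @ fs)) =
      bits_weight ps es * subprod_prob G hs qs (inv (subprod G gs es) \<otimes> g)"
      using es ps by (simp add: subprod_prob_def bits_weight_append sum_distrib_left)
  qed
  finally show ?thesis .
qed

lemma (in subgroup) subprod_prob_uniform_subgroup:
  assumes "uniform_subprod (G\<lparr>carrier := H\<rparr>) hs qs"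
  shows "subprod_prob G hs qs y = (if y \<in> H then 1 / real (card H) else 0)"
proof (cases "y \<in> H")
  case False
  have "set hs \<subseteq> H"
    using assms by (simp add: uniform_subprod_def)
  with False have "{fs. length fs = length hs \<and> subprod G hs fs = y} = {}"
    using subprod_mem by blast
  with False show ?thesis
    unfolding subprod_prob_def by (metis sum.empty)
qed (use assms in \<open>simp add: uniform_subprod_def\<close>)

lemma (in normal) rcos_eq_iff_inv_mult_mem:
  assumes x: "x \<in> carrier G" and g: "g \<in> carrier G"
  shows "H #> x = H #> g \<longleftrightarrow> inv x \<otimes> g \<in> H"
proof -
  have "H #> x = H #> g \<longleftrightarrow> g \<in> H #> x"
    using repr_independence[OF _ x subgroup_axioms] repr_independenceD[OF subgroup_axioms g]
    by blast
  also have "\<dots> \<longleftrightarrow> g \<in> x <# H"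
    using coset_eq x by simp
  also have "\<dots> \<longleftrightarrow> inv x \<otimes> g \<in> H"
    using lcos_module_imp[OF is_group x] lcos_module_rev[OF is_group x g] by blast
  finally show ?thesis .
qed

lemma (in normal) obtain_r_coset_representatives:
  assumes "set Cs \<subseteq> carrier (G Mod H)"
  obtains cs where "set cs \<subseteq> carrier G" "Cs = map (\<lambda>c. H #> c) cs"
proof -
  have "Cs \<in> lists ((\<lambda>c. H #> c) ` carrier G)"
    using assms by (auto simp: carrier_FactGroup)
  with that show thesis
    by (auto simp: lists_image)
qed

lemma (in normal) uniform_subprod_append_FactGroup:
  assumes fin: "finite (carrier G)"
    and unif_H: "uniform_subprod (G\<lparr>carrier := H\<rparr>) hs qs"
    and unif_Mod: "uniform_subprod (G Mod H) (map (\<lambda>c. H #> c) cs) ps"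
    and cs: "set cs \<subseteq> carrier G"
  shows "uniform_subprod G (cs @ hs) (ps @ qs)"
proof -
  have hs: "set hs \<subseteq> carrier G"
    using unif_H subset by (auto simp: uniform_subprod_def)
  have ps: "length ps = length cs"
    using unif_Mod by (simp add: uniform_subprod_def)
  have quotient_hom: "group_hom G (G Mod H) (\<lambda>c. H #> c)"
    by (simp add: group_hom_def group_hom_axioms_def is_group factorgroup_is_group r_coset_hom_Mod)
  have "subprod_prob G (cs @ hs) (ps @ qs) g = 1 / real (card (carrier G))"
    if g: "g \<in> carrier G" for g
  proof -
    have "subprod_prob G (cs @ hs) (ps @ qs) g =
      (\<Sum>es | length es = length cs.
         if H #> subprod G cs es = H #> g then bits_weight ps es / real (card H) else 0)"
      using rcos_eq_iff_inv_mult_mem[OF subprod_closed[OF cs] g]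
      by (simp add: subprod_prob_append[OF cs hs ps g] subprod_prob_uniform_subgroup[OF unif_H]
          if_distrib[of "\<lambda>x. _ * x"] cong: if_cong)
    also have "\<dots> = (\<Sum>es | length es = length cs \<and> H #> subprod G cs es = H #> g.
        bits_weight ps es) / real (card H)"
      by (simp add: sum.If_cases finite_bool_lists_length Collect_conj_eq sum_divide_distrib)
    also have "\<dots> = subprod_prob (G Mod H) (map (\<lambda>c. H #> c) cs) ps (H #> g) / real (card H)"
      by (simp add: subprod_prob_def group_hom.subprod_map_hom[OF quotient_hom cs])
    also have "\<dots> = 1 / (real (card (rcosets H)) * real (card H))"
      using unif_Mod g by (simp add: uniform_subprod_def FactGroup_def rcosetsI[OF subset])
    also have "\<dots> = 1 / real (card (carrier G))"
      using lagrange[OF subgroup_axioms] finite_imp_card_positive[OF fin]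
      by (simp add: order_def flip: of_nat_mult)
    finally show ?thesis .
  qed
  with unif_H unif_Mod cs hs show ?thesis
    by (auto simp: uniform_subprod_def)
qed

lemma mixlen_attained:
  assumes "mixable G"
  obtains gs ps where "length gs = mixlen G" "uniform_subprod G gs ps"
proof -
  have "\<exists>k gs ps. length gs = k \<and> uniform_subprod G gs ps"
    using assms by (auto simp: mixable_def)
  then have "\<exists>gs ps. length gs = mixlen G \<and> uniform_subprod G gs ps"
    unfolding mixlen_def by (rule LeastI_ex)
  with that show thesis by blast
qed

lemma mixlen_le_length: "uniform_subprod G gs ps \<Longrightarrow> mixlen G \<le> length gs"
  unfolding mixlen_def by (rule Least_le) blast

theorem mainTheorem11:
  fixes G :: "('a, 'b) monoid_scheme" and N :: "'a set"
  assumes "group G" and "finite (carrier G)" and "N \<lhd> G"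
    and "mixable (G\<lparr>carrier := N\<rparr>)" and "mixable (G Mod N)"
  shows "mixable G \<and> mixlen G \<le> mixlen (G\<lparr>carrier := N\<rparr>) + mixlen (G Mod N)"
proof -
  interpret normal N G by (rule assms(3))
  obtain ns qs where ns: "length ns = mixlen (G\<lparr>carrier := N\<rparr>)"
    and unif_N: "uniform_subprod (G\<lparr>carrier := N\<rparr>) ns qs"
    using mixlen_attained[OF assms(4)] by blast
  obtain Cs ps where Cs: "length Cs = mixlen (G Mod N)"
    and unif_Mod: "uniform_subprod (G Mod N) Cs ps"
    using mixlen_attained[OF assms(5)] by blast
  obtain cs where cs: "set cs \<subseteq> carrier G" and Cs_eq: "Cs = map (\<lambda>c. N #>\<^bsub>G\<^esub> c) cs"
    using unif_Mod by (auto simp: uniform_subprod_def elim: obtain_r_coset_representatives)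
  have "uniform_subprod G (cs @ ns) (ps @ qs)"
    using uniform_subprod_append_FactGroup[OF assms(2) unif_N _ cs] unif_Mod Cs_eq by simp
  moreover have "length (cs @ ns) = mixlen (G\<lparr>carrier := N\<rparr>) + mixlen (G Mod N)"
    using ns Cs Cs_eq by simp
  ultimately show ?thesis
    using mixlen_le_length unfolding mixable_def by metis
qed

end
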